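(* Let $K,M\in\mathbb{N}$, $L>0$, and let $\mathbf{x}$ be a random vector with probability density $p\colon\mathbb{R}^K\to\mathbb{R}_+$ supported on $\mathcal{X}=[0,1]^K$ (i.e. $\Pr(\mathbf{x}\in\mathcal{X})=1$) which is $L$-Lipschitz on $\mathbb{R}^K$ with respect to the $\ell_1$-norm. Let $\tilde{\mathbf{x}}=\Delta_M(\mathbf{x})$ be the element-wise quantization with $\Delta_M(x)=\lfloor Mx\rfloor/M$, and let $\bar{\mathbf{x}}=\tilde{\mathbf{x}}+\mathbf{u}$ with $\mathbf{u}$ uniform on $[0,\frac1M]^K$ independent of $\mathbf{x}$; let $q$ be the density of $\bar{\mathbf{x}}$. Then $|p(\mathbf{x})-q(\mathbf{x})|\le\frac{LK}{2M}$ for every $\mathbf{x}\in\mathcal{X}$.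
   Context: Equivalently, $q$ is constant on each cell $\Delta_M^{-1}(\tilde{\mathbf{x}})$ and equals $M^K\int_{\Delta_M^{-1}(\tilde{\mathbf{x}})}p\,\mathrm{d}\lambda^K$ there. *)

theory Defs
  imports "HOL-Analysis.Analysis"
begin

definition quant :: "nat \<Rightarrow> real ^ 'n \<Rightarrow> real ^ 'n" where
  "quant M x = (\<chi> i. real_of_int \<lfloor>real M * x $ i\<rfloor> / real M)"

text \<open>Density of the dithered quantized vector: on each cell Delta_M^{-1}(x~) it equals
  M^K times the integral of p over that cell.\<close>
definition dither_density :: "nat \<Rightarrow> (real ^ 'n \<Rightarrow> real) \<Rightarrow> real ^ 'n \<Rightarrow> real" where
  "dither_density M p x = real M ^ CARD('n) * integral (quant M -` {quant M x}) p"

definition l1_dist :: "real ^ 'n \<Rightarrow> real ^ 'n \<Rightarrow> real" where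
  "l1_dist x y = (\<Sum>i\<in>UNIV. \<bar>x $ i - y $ i\<bar>)"

end

theory Submission
  imports Defs
begin

text \<open>Up to a null set, the quantization cell containing \<open>x\<close> is a cube \<open>C = [a, b]\<close> of side
  \<open>1/M\<close>, and the dither density at \<open>x\<close> is the average of \<open>p\<close> over \<open>C\<close>. The reflection
  \<open>y \<mapsto> a + b - y\<close> of \<open>C\<close> preserves this average, so \<open>p x - q x\<close> is the average over \<open>C\<close> of
  \<open>p x - (p y + p (a + b - y)) / 2\<close>. Coordinatewise, \<open>|x - y| + |x - (a + b - y)| \<le> b - a\<close> on
  \<open>[a, b]\<close>, so by the Lipschitz condition this integrand is bounded by \<open>L K / (2 M)\<close>.
  The bound holds at every point.\<close>

lemma has_integral_reflect_cbox:
  fixes a b :: "'a::euclidean_space"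
  assumes "(f has_integral i) (cbox a b)"
  shows "((\<lambda>y. f (a + b - y)) has_integral i) (cbox a b)"
proof -
  have "(\<lambda>y. a + b - y) ` cbox a b = cbox a b"
  proof (intro equalityI image_subsetI subsetI)
    show "a + b - y \<in> cbox a b" if "y \<in> cbox a b" for y
      using that by (auto simp: mem_box inner_diff_left inner_add_left)
    then show "y \<in> (\<lambda>y. a + b - y) ` cbox a b" if "y \<in> cbox a b" for y
      using that by (intro image_eqI[of _ _ "a + b - y"]) auto
  qed
  then show ?thesis
    using has_integral_affinity[OF assms, of "-1" "a + b"] by (simp add: algebra_simps)
qed

lemma integral_between_box_cbox:
  fixes f :: "'a::euclidean_space \<Rightarrow> 'b::banach"
  assumes "box a b \<subseteq> S" "S \<subseteq> cbox a b"
  shows "integral S f = integral (cbox a b) f"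
  by (rule integral_spike_set)
    (use assms in \<open>auto intro: negligible_subset[OF negligible_frontier_interval]\<close>)

lemma abs_diff_reflect_le:
  fixes a b x y :: real
  assumes "a \<le> x" "x \<le> b" "a \<le> y" "y \<le> b"
  shows "\<bar>x - y\<bar> + \<bar>x - (a + b - y)\<bar> \<le> b - a"
  using assms by (auto simp: abs_if)

lemma l1_dist_reflect_le:
  assumes "x \<in> cbox a b" "y \<in> cbox a b"
  shows "l1_dist x y + l1_dist x (a + b - y) \<le> l1_dist a b"
  unfolding l1_dist_def sum.distrib[symmetric]
proof (rule sum_mono)
  fix i
  have "a $ i \<le> x $ i" "x $ i \<le> b $ i" "a $ i \<le> y $ i" "y $ i \<le> b $ i"
    using assms by (auto simp: mem_box_cart)
  then show "\<bar>x $ i - y $ i\<bar> + \<bar>x $ i - (a + b - y) $ i\<bar> \<le> \<bar>a $ i - b $ i\<bar>"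
    using abs_diff_reflect_le[of "a $ i" "x $ i" "b $ i" "y $ i"] by simp
qed

lemma l1_dist_le_card_dist: "l1_dist x y \<le> real CARD('n) * dist x y"
  for x y :: "real ^ 'n"
proof -
  have "l1_dist x y \<le> (\<Sum>i\<in>(UNIV :: 'n set). dist x y)"
    unfolding l1_dist_def dist_norm
    by (rule sum_mono) (use component_le_norm_cart[of "x - y"] in simp)
  then show ?thesis by simp
qed

lemma l1_lipschitz_imp_lipschitz_on:
  fixes f :: "real ^ 'n \<Rightarrow> real"
  assumes "L \<ge> 0" "\<And>x y. \<bar>f x - f y\<bar> \<le> L * l1_dist x y"
  shows "(L * real CARD('n))-lipschitz_on UNIV f"
proof (rule lipschitz_onI)
  fix x y
  have "\<bar>f x - f y\<bar> \<le> L * (real CARD('n) * dist x y)"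
    using assms(2)[of x y] mult_left_mono[OF l1_dist_le_card_dist[of x y] assms(1)] by linarith
  then show "dist (f x) (f y) \<le> L * real CARD('n) * dist x y"
    by (simp add: dist_real_def mult.assoc)
qed (use assms(1) in simp)

lemma l1_lipschitz_integral_cbox_bound:
  fixes f :: "real ^ 'n \<Rightarrow> real"
  assumes f: "f integrable_on cbox a b" and x: "x \<in> cbox a b" and "L \<ge> 0"
    and lip: "\<And>y. y \<in> cbox a b \<Longrightarrow> \<bar>f x - f y\<bar> \<le> L * l1_dist x y"
  shows "\<bar>f x * Henstock_Kurzweil_Integration.content (cbox a b) - integral (cbox a b) f\<bar>
    \<le> L * l1_dist a b / 2 * Henstock_Kurzweil_Integration.content (cbox a b)"
proof -
  let ?I = "integral (cbox a b) f"
  let ?g = "\<lambda>y. f x - (f y + f (a + b - y)) / 2"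
  have "((\<lambda>y. (f y + f (a + b - y)) / 2) has_integral (?I + ?I) / 2) (cbox a b)"
    using f by (intro has_integral_divide has_integral_add has_integral_reflect_cbox)
      (simp_all add: integrable_integral)
  from has_integral_diff[OF has_integral_const[of "f x"] this]
  have g: "(?g has_integral f x * Henstock_Kurzweil_Integration.content (cbox a b) - ?I) (cbox a b)"
    by (simp add: mult.commute)
  have bound: "norm (?g y) \<le> L * l1_dist a b / 2" if y: "y \<in> cbox a b" for y
  proof -
    have y': "a + b - y \<in> cbox a b"
      using y by (auto simp: mem_box_cart)
    have "\<bar>f x - f y\<bar> + \<bar>f x - f (a + b - y)\<bar> \<le> L * (l1_dist x y + l1_dist x (a + b - y))"
      using lip[OF y] lip[OF y'] by (simp add: algebra_simps)
    also have "\<dots> \<le> L * l1_dist a b"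
      using l1_dist_reflect_le[OF x y] \<open>L \<ge> 0\<close> by (rule mult_left_mono)
    finally show ?thesis by (simp add: abs_if field_simps split: if_splits)
  qed
  have "0 \<le> L * l1_dist a b / 2"
    using \<open>L \<ge> 0\<close> by (simp add: l1_dist_def sum_nonneg)
  from has_integral_bound[OF this g bound] show ?thesis
    by simp
qed

lemma quant_eq_iff:
  assumes "M > 0"
  shows "quant M y = quant M x \<longleftrightarrow>
    (\<forall>i. quant M x $ i \<le> y $ i \<and> y $ i < quant M x $ i + 1 / real M)"
proof -
  have "quant M y = quant M x \<longleftrightarrow> (\<forall>i. \<lfloor>real M * y $ i\<rfloor> = \<lfloor>real M * x $ i\<rfloor>)"
    using assms by (auto simp: quant_def vec_eq_iff)
  also have "\<dots> \<longleftrightarrow> (\<forall>i. quant M x $ i \<le> y $ i \<and> y $ i < quant M x $ i + 1 / real M)"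
    using assms by (simp add: floor_eq_iff quant_def field_simps)
  finally show ?thesis .
qed

lemma box_subset_quant_cell:
  assumes "M > 0"
  shows "box (quant M x) (quant M x + vec (1 / real M)) \<subseteq> quant M -` {quant M x}"
  using assms by (auto simp: quant_eq_iff mem_box_cart less_imp_le)

lemma quant_cell_subset_cbox:
  assumes "M > 0"
  shows "quant M -` {quant M x} \<subseteq> cbox (quant M x) (quant M x + vec (1 / real M))"
  using assms by (auto simp: quant_eq_iff mem_box_cart less_imp_le)

theorem lemma3:
  fixes p :: "real ^ 'n \<Rightarrow> real" and M :: nat and L :: real
  assumes "M > 0" and "L > 0"
    and "\<And>x. p x \<ge> 0"
    and "(p has_integral 1) UNIV"
    and "(p has_integral 1) (cbox 0 1)"
    and "\<And>x y. \<bar>p x - p y\<bar> \<le> L * l1_dist x y"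
    and "x \<in> cbox 0 1"
  shows "\<bar>p x - dither_density M p x\<bar> \<le> L * real CARD('n) / (2 * real M)"
proof -
  define a where "a = quant M x"
  define b :: "real ^ 'n" where "b = a + vec (1 / real M)"
  have cell: "integral (quant M -` {a}) p = integral (cbox a b) p"
    unfolding a_def b_def
    by (intro integral_between_box_cbox box_subset_quant_cell quant_cell_subset_cbox assms(1))
  have x: "x \<in> cbox a b"
    using quant_cell_subset_cbox[OF assms(1), of x] by (auto simp: a_def b_def)
  have "continuous_on UNIV p"
    using l1_lipschitz_imp_lipschitz_on assms(2,6) lipschitz_on_continuous_on
    by (metis less_imp_le)
  then have "p integrable_on cbox a b"
    by (meson continuous_on_subset integrable_continuous subset_UNIV)
  from l1_lipschitz_integral_cbox_bound[OF this x _ assms(6)]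
  have "\<bar>p x * Henstock_Kurzweil_Integration.content (cbox a b) - integral (cbox a b) p\<bar>
      \<le> L * l1_dist a b / 2 * Henstock_Kurzweil_Integration.content (cbox a b)"
    using assms(2) by simp
  moreover have "Henstock_Kurzweil_Integration.content (cbox a b) = 1 / real M ^ CARD('n)"
    using x by (subst content_cbox_cart) (auto simp: b_def power_one_over)
  moreover have "l1_dist a b = real CARD('n) / real M"
    by (simp add: l1_dist_def b_def)
  moreover have "p x - real M ^ CARD('n) * integral (cbox a b) p
      = real M ^ CARD('n) * (p x * (1 / real M ^ CARD('n)) - integral (cbox a b) p)"
    using assms(1) by (simp add: field_simps)
  ultimately show ?thesis
    using assms(1) by (simp add: dither_density_def a_def[symmetric] cell abs_mult field_simps)
qed

end
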